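(* Let $d\ge1$ and let $(\mathbf W,Y)$, $(\mathbf W',Y')$ be pairs (a random vector in $\mathbb R^d$, a real random variable) on a common probability space such that: $\mathbb E\mathbf W=0$ with invertible covariance matrix $\Sigma$; $\mathbb EY=0$, $\operatorname{Var}(Y)=\sigma_Y^2$; each coordinate of $\mathbf W$ is uncorrelated with $Y$; $(\mathbf W,Y,\mathbf W',Y')\overset d=(\mathbf W',Y',\mathbf W,Y)$; $Y$ takes values in $\zeta+\mathbb Z$ for some $\zeta\in[0,1)$; $\Delta Y:=Y'-Y\in\{-1,0,1\}$ a.s.; and $\mathbb P(\Delta Y=\pm1\mid\mathbf W,Y)=Q+R_{0,\pm}$ where $Q=\lambda\sigma_Y^2$ for some $\lambda\in(0,1)$ and $R_{0,\pm}$ are random variables. Then for every $1$-Lipschitz function $h:\mathbb R^d\to\mathbb R$ and every $k$ with $\mathbb P(Y=k)>0$ and $\mathbb P(Y=k-1)>0$, $$\Big|\mathbb E\big(h(\mathbf W)-h(\Sigma^{1/2}\mathbf Z)\big)\big(\mathbf 1_{Y=k}-\mathbf 1_{Y=k-1}\big)\Big|\le\frac1Q\mathbb E\big(|\Delta\mathbf W|\mathbf 1_{Y\in\{k-1,k\}}\big)+\frac1Q\mathbb E\Big(\big(|\mathbf W|+\sqrt{\operatorname{tr}\Sigma}\big)\big(|R_{0,+}|+|R_{0,-}|\big)\mathbf 1_{Y\in\{k-1,k\}}\Big),$$ where $\mathbf Z$ is a $d$-dimensional standard normal vector independent of everything else.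
   Context: $\Delta\mathbf W:=\mathbf W'-\mathbf W$; $|\cdot|$ denotes the Euclidean norm, and $1$-Lipschitz is with respect to it. *)

theory Defs
  imports "HOL-Analysis.Analysis" "HOL-Probability.Probability"
begin

definition psd_matrix :: "real^'n^'n \<Rightarrow> bool" where
  "psd_matrix A \<longleftrightarrow> transpose A = A \<and> (\<forall>x. 0 \<le> x \<bullet> (A *v x))"

definition matrix_sqrt :: "real^'n^'n \<Rightarrow> real^'n^'n" where
  "matrix_sqrt A = (THE S. psd_matrix S \<and> S ** S = A)"

end

theory Submission
  imports Defs
begin

(*
  Write phi(y) = 1{y = k} - 1{y = k - 1} and c = E h(Sigma^(1/2) Z). As Z is independent of
  (W, Y), the Gaussian term h(Sigma^(1/2) Z) may be replaced by its mean c, and for g = h - c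
  the Lipschitz property gives |g(w)| <= |w| + E |Sigma^(1/2) Z| <= |w| + sqrt(tr Sigma).

  Conditioning on (W, Y) replaces the indicators of {Delta Y = 1} and {Delta Y = -1} by
  Q + R_{0,+} and Q + R_{0,-}, while exchangeability gives
  E g(W) 1{Y = k - 1, Y' = k} = E g(W') 1{Y = k, Y' = k - 1}. Hence
    Q E g(W) phi(Y) = E g(W) (1{Y = k - 1} R_{0,+} - 1{Y = k} R_{0,-})
                      - E (g(W') - g(W)) 1{Y = k, Y' = k - 1},
  and |g(W') - g(W)| <= |Delta W| bounds the second term.
*)

section \<open>Orthonormal eigenbases and square roots of symmetric matrices\<close>

lemma symmetric_matrix_inner_commute:
  fixes A :: "real^'n^'n"
  assumes "transpose A = A"
  shows "x \<bullet> (A *v y) = (A *v x) \<bullet> y"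
  by (metis assms dot_lmul_matrix transpose_matrix_vector)

lemma linear_coeff_zero_if_quadratic_nonpos:
  fixes a b :: real
  assumes "\<And>t. a * t + b * t\<^sup>2 \<le> 0"
  shows "a = 0"
proof -
  define s where "s = \<bar>b\<bar> + 1"
  have s: "s > 0" "s + b > 0" unfolding s_def by auto
  have "a * (a / s) + b * (a / s)\<^sup>2 \<le> 0" by (rule assms)
  hence "a\<^sup>2 * (s + b) / s\<^sup>2 \<le> 0" using s by (simp add: field_simps power2_eq_square)
  hence "a\<^sup>2 * (s + b) \<le> 0" using s by (simp add: divide_le_0_iff)
  hence "a\<^sup>2 \<le> 0" using s by (simp add: mult_le_0_iff)
  thus ?thesis by simp
qed

text \<open>For \<open>y \<in> V\<close> orthogonal to the maximiser \<open>x\<close>, the quadratic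
  \<open>t \<mapsto> q(x + t y) - q(x) |x + t y|\<^sup>2\<close> is nonpositive, so its linear coefficient \<open>2 y \<bullet> A x\<close>
  vanishes; then \<open>A x - q(x) x\<close>, which lies in \<open>V\<close> and is orthogonal to \<open>x\<close>, is orthogonal
  to itself.\<close>
lemma max_quadratic_form_on_sphere_eigenvector:
  fixes A :: "real^'n^'n"
  assumes sym: "transpose A = A" and V: "subspace V" and inv: "\<And>y. y \<in> V \<Longrightarrow> A *v y \<in> V"
    and x: "x \<in> V" "norm x = 1"
    and max: "\<And>z. z \<in> V \<Longrightarrow> norm z = 1 \<Longrightarrow> z \<bullet> (A *v z) \<le> x \<bullet> (A *v x)"
  shows "A *v x = (x \<bullet> (A *v x)) *\<^sub>R x"
proof -
  define q where "q z = z \<bullet> (A *v z)" for z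
  have xx: "x \<bullet> x = 1" using x by (simp add: norm_eq_1)
  have bound: "q z \<le> q x * (z \<bullet> z)" if "z \<in> V" for z
  proof (cases "z = 0")
    case False
    have "q (z /\<^sub>R norm z) \<le> q x"
      unfolding q_def using that False V by (intro max) (auto simp: subspace_scale)
    hence "q z / (norm z)\<^sup>2 \<le> q x"
      by (simp add: q_def matrix_vector_mult_scaleR field_simps power2_eq_square)
    thus ?thesis using False by (simp add: divide_le_eq mult.commute power2_norm_eq_inner)
  qed (simp add: q_def)
  have orth: "y \<bullet> (A *v x) = 0" if y: "y \<in> V" "x \<bullet> y = 0" for y
  proof -
    have "2 * (y \<bullet> (A *v x)) * t + (q y - q x * (y \<bullet> y)) * t\<^sup>2 \<le> 0" for t
    proof -
      have "q (x + t *\<^sub>R y) \<le> q x * ((x + t *\<^sub>R y) \<bullet> (x + t *\<^sub>R y))"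
        using V x y by (intro bound) (simp add: subspace_add subspace_scale)
      moreover have "x \<bullet> (A *v y) = y \<bullet> (A *v x)"
        using symmetric_matrix_inner_commute[OF sym, of x y] by (simp add: inner_commute)
      ultimately show ?thesis
        using xx y unfolding q_def
        by (simp add: matrix_vector_mult_scaleR matrix_vector_right_distrib inner_add_left
            inner_add_right inner_commute power2_eq_square algebra_simps)
    qed
    from linear_coeff_zero_if_quadratic_nonpos[OF this] show ?thesis by simp
  qed
  define w where "w = A *v x - q x *\<^sub>R x"
  have wV: "w \<in> V" unfolding w_def using V x inv by (simp add: subspace_diff subspace_scale)
  have wx: "x \<bullet> w = 0" unfolding w_def using xx by (simp add: inner_diff_right q_def)
  have "w \<bullet> w = w \<bullet> (A *v x) - q x * (w \<bullet> x)" unfolding w_def by (simp add: inner_diff_right)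
  also have "\<dots> = 0" using orth[OF wV wx] wx by (simp add: inner_commute)
  finally show ?thesis unfolding w_def q_def by simp
qed

lemma symmetric_matrix_eigenvector_in_invariant_subspace:
  fixes A :: "real^'n^'n"
  assumes sym: "transpose A = A" and V: "subspace V" and inv: "\<And>y. y \<in> V \<Longrightarrow> A *v y \<in> V"
    and y: "y \<in> V" "y \<noteq> 0"
  shows "\<exists>x\<in>V. norm x = 1 \<and> A *v x = (x \<bullet> (A *v x)) *\<^sub>R x"
proof -
  define K where "K = V \<inter> sphere 0 1"
  have "compact K" unfolding K_def using V by (simp add: closed_subspace closed_Int_compact)
  moreover have "y /\<^sub>R norm y \<in> K" using y V unfolding K_def by (auto simp: subspace_scale)
  moreover have "continuous_on K (\<lambda>z. z \<bullet> (A *v z))"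
    by (intro continuous_intros linear_continuous_on matrix_vector_mul_bounded_linear)
  ultimately obtain x where "x \<in> K" and "\<And>z. z \<in> K \<Longrightarrow> z \<bullet> (A *v z) \<le> x \<bullet> (A *v x)"
    using continuous_attains_sup[of K "\<lambda>z. z \<bullet> (A *v z)"] by blast
  with sym V inv show ?thesis
    unfolding K_def by (intro bexI[of _ x]) (auto intro: max_quadratic_form_on_sphere_eigenvector)
qed

definition orthonormal_eigenvectors :: "real^'n^'n \<Rightarrow> (real^'n) set \<Rightarrow> bool" where
  "orthonormal_eigenvectors A B \<longleftrightarrow> finite B \<and> pairwise orthogonal B \<and>
     (\<forall>b\<in>B. norm b = 1 \<and> (\<exists>\<mu>. A *v b = \<mu> *\<^sub>R b))"

lemma inner_orthonormal_sum:
  fixes B :: "'a::real_inner set"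
  assumes "finite B" "pairwise orthogonal B" "\<And>b. b \<in> B \<Longrightarrow> norm b = 1" "c \<in> B"
  shows "c \<bullet> (\<Sum>b\<in>B. f b *\<^sub>R b) = f c"
proof -
  have orth: "c \<bullet> b = 0" if "b \<in> B - {c}" for b
    using pairwiseD[OF assms(2,4), of b] that by (auto simp: orthogonal_def)
  have "c \<bullet> (\<Sum>b\<in>B. f b *\<^sub>R b) = (\<Sum>b\<in>B. f b * (c \<bullet> b))" by (simp add: inner_sum_right)
  also have "\<dots> = f c * (c \<bullet> c) + (\<Sum>b\<in>B - {c}. f b * (c \<bullet> b))"
    using assms(1,4) by (rule sum.remove[where g = "\<lambda>b. f b * (c \<bullet> b)"])
  also have "(\<Sum>b\<in>B - {c}. f b * (c \<bullet> b)) = 0" using orth by simp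
  finally show ?thesis using assms(3,4) by (simp add: norm_eq_1)
qed

lemma card_orthonormal_eigenvectors_le:
  fixes A :: "real^'n^'n"
  assumes "orthonormal_eigenvectors A B"
  shows "card B \<le> CARD('n)"
proof -
  have "independent B"
    using assms by (intro pairwise_orthogonal_independent) (auto simp: orthonormal_eigenvectors_def)
  hence "card B \<le> DIM(real^'n)" using independent_bound[of B] by blast
  thus ?thesis by simp
qed

text \<open>A maximal orthonormal family of eigenvectors spans: otherwise its orthogonal
  complement, which \<open>A\<close> leaves invariant, contains a further unit eigenvector.\<close>
lemma symmetric_matrix_orthonormal_eigenbasis:
  fixes A :: "real^'n^'n"
  assumes sym: "transpose A = A"
  obtains B where "orthonormal_eigenvectors A B" and "\<And>v. v = (\<Sum>b\<in>B. (b \<bullet> v) *\<^sub>R b)"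
proof -
  have "orthonormal_eigenvectors A {}" unfolding orthonormal_eigenvectors_def by auto
  moreover have "\<forall>C. orthonormal_eigenvectors A C \<longrightarrow> card C < Suc CARD('n)"
    using card_orthonormal_eigenvectors_le le_imp_less_Suc by blast
  ultimately obtain B where B: "orthonormal_eigenvectors A B"
    and Bmax: "\<And>C. orthonormal_eigenvectors A C \<Longrightarrow> card C \<le> card B"
    using ex_has_greatest_nat[of "orthonormal_eigenvectors A" "{}" card] by blast
  have fin: "finite B" and Bo: "pairwise orthogonal B" and Bn: "\<And>b. b \<in> B \<Longrightarrow> norm b = 1"
    and Be: "\<And>b. b \<in> B \<Longrightarrow> \<exists>\<mu>. A *v b = \<mu> *\<^sub>R b"
    using B unfolding orthonormal_eigenvectors_def by auto
  define V where "V = {y. \<forall>b\<in>B. orthogonal b y}"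
  have V: "subspace V" unfolding V_def by (rule subspace_orthogonal_to_vectors)
  have inv: "A *v y \<in> V" if "y \<in> V" for y
  proof -
    have "b \<bullet> (A *v y) = 0" if b: "b \<in> B" for b
    proof -
      obtain \<mu> where "A *v b = \<mu> *\<^sub>R b" using Be[OF b] by blast
      hence "b \<bullet> (A *v y) = \<mu> * (b \<bullet> y)" using symmetric_matrix_inner_commute[OF sym, of b y] by simp
      thus ?thesis using \<open>y \<in> V\<close> b unfolding V_def orthogonal_def by simp
    qed
    thus ?thesis unfolding V_def orthogonal_def by simp
  qed
  have "v = (\<Sum>b\<in>B. (b \<bullet> v) *\<^sub>R b)" for v
  proof (rule ccontr)
    define r where "r = v - (\<Sum>b\<in>B. (b \<bullet> v) *\<^sub>R b)"
    assume "v \<noteq> (\<Sum>b\<in>B. (b \<bullet> v) *\<^sub>R b)"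
    hence "r \<noteq> 0" unfolding r_def by simp
    moreover have "b \<bullet> r = 0" if "b \<in> B" for b
      using inner_orthonormal_sum[OF fin Bo Bn that, of "\<lambda>b. b \<bullet> v"]
      unfolding r_def by (simp add: inner_diff_right)
    hence "r \<in> V" unfolding V_def orthogonal_def by blast
    ultimately obtain x where x: "x \<in> V" "norm x = 1" "A *v x = (x \<bullet> (A *v x)) *\<^sub>R x"
      using symmetric_matrix_eigenvector_in_invariant_subspace[OF sym V inv] by blast
    have "x \<notin> B"
    proof
      assume "x \<in> B"
      with x(1) have "x \<bullet> x = 0" unfolding V_def orthogonal_def by blast
      with x(2) show False by (simp add: norm_eq_1)
    qed
    moreover have "orthonormal_eigenvectors A (insert x B)"
    proof -
      have "pairwise orthogonal (insert x B)"
        using Bo x(1) unfolding V_def by (auto simp: pairwise_insert orthogonal_commute)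
      moreover have "\<exists>\<mu>. A *v x = \<mu> *\<^sub>R x" using x(3) by blast
      ultimately show ?thesis using B x(2) unfolding orthonormal_eigenvectors_def by auto
    qed
    ultimately show False using Bmax[of "insert x B"] fin by simp
  qed
  with B that show ?thesis by blast
qed

lemma psd_matrix_mult_vector_eq_0:
  fixes S :: "real^'n^'n"
  assumes S: "psd_matrix S" and v: "v \<bullet> (S *v v) = 0"
  shows "S *v v = 0"
proof -
  have sym: "transpose S = S" and pos: "\<And>x. 0 \<le> x \<bullet> (S *v x)"
    using S unfolding psd_matrix_def by auto
  define y where "y = S *v v"
  have "(- 2 * (y \<bullet> y)) * t + (- (y \<bullet> (S *v y))) * t\<^sup>2 \<le> 0" for t
  proof -
    have "0 \<le> (v + t *\<^sub>R y) \<bullet> (S *v (v + t *\<^sub>R y))" by (rule pos)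
    moreover have "v \<bullet> (S *v y) = y \<bullet> y"
      using symmetric_matrix_inner_commute[OF sym, of v y] by (simp add: y_def inner_commute)
    ultimately show ?thesis using v unfolding y_def
      by (simp add: matrix_vector_mult_scaleR matrix_vector_right_distrib inner_add_left
          inner_add_right inner_commute power2_eq_square algebra_simps)
  qed
  from linear_coeff_zero_if_quadratic_nonpos[OF this] have "y \<bullet> y = 0" by simp
  thus ?thesis unfolding y_def by simp
qed

lemma outer_product_mult_vector:
  fixes b :: "real^'n"
  shows "(\<chi> i j. b $ i * b $ j) *v x = (b \<bullet> x) *\<^sub>R b"
  by (simp add: vec_eq_iff matrix_vector_mult_def inner_vec_def sum_distrib_left sum_distrib_right)
     (auto intro: sum.cong simp: mult_ac)

lemma sum_matrix_mult_vector:
  fixes M :: "'i \<Rightarrow> real^'n^'m"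
  shows "sum M I *v x = (\<Sum>i\<in>I. M i *v x)"
  by (induction I rule: infinite_finite_induct) (auto simp: matrix_vector_mult_add_rdistrib)

lemma psd_matrix_sqrt_exists:
  fixes A :: "real^'n^'n"
  assumes A: "psd_matrix A"
  obtains S where "psd_matrix S" "S ** S = A"
proof -
  have sym: "transpose A = A" and pos: "\<And>x. 0 \<le> x \<bullet> (A *v x)"
    using A unfolding psd_matrix_def by auto
  obtain B where B: "orthonormal_eigenvectors A B" and expand: "\<And>v. v = (\<Sum>b\<in>B. (b \<bullet> v) *\<^sub>R b)"
    using symmetric_matrix_orthonormal_eigenbasis[OF sym] by blast
  have fin: "finite B" and Bo: "pairwise orthogonal B" and Bn: "\<And>b. b \<in> B \<Longrightarrow> norm b = 1"
    using B unfolding orthonormal_eigenvectors_def by auto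
  define m where "m b = b \<bullet> (A *v b)" for b
  have Ab: "A *v b = m b *\<^sub>R b" if "b \<in> B" for b
  proof -
    obtain \<mu> where "A *v b = \<mu> *\<^sub>R b" using B \<open>b \<in> B\<close> unfolding orthonormal_eigenvectors_def by blast
    moreover from this have "m b = \<mu>" using Bn[OF \<open>b \<in> B\<close>] by (simp add: m_def norm_eq_1)
    ultimately show ?thesis by simp
  qed
  have m_nonneg: "0 \<le> m b" for b unfolding m_def by (rule pos)
  define S :: "real^'n^'n" where "S = (\<Sum>b\<in>B. sqrt (m b) *\<^sub>R (\<chi> i j. b $ i * b $ j))"
  have Sv: "S *v x = (\<Sum>b\<in>B. (sqrt (m b) * (b \<bullet> x)) *\<^sub>R b)" for x
    unfolding S_def sum_matrix_mult_vector
    by (simp add: scaleR_matrix_vector_assoc[symmetric] outer_product_mult_vector)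
  have "transpose S = S"
    unfolding S_def by (simp add: vec_eq_iff transpose_def sum_component mult.commute)
  moreover have "0 \<le> x \<bullet> (S *v x)" for x
    unfolding Sv inner_sum_right using m_nonneg
    by (intro sum_nonneg) (simp add: inner_commute mult.assoc)
  moreover have "S *v (S *v x) = A *v x" for x
  proof -
    have coeff: "b \<bullet> (S *v x) = sqrt (m b) * (b \<bullet> x)" if "b \<in> B" for b
      unfolding Sv by (rule inner_orthonormal_sum[OF fin Bo Bn that])
    have "S *v (S *v x) = (\<Sum>b\<in>B. (sqrt (m b) * (b \<bullet> (S *v x))) *\<^sub>R b)" by (rule Sv)
    also have "\<dots> = (\<Sum>b\<in>B. (sqrt (m b) * (sqrt (m b) * (b \<bullet> x))) *\<^sub>R b)"
      using coeff by (intro sum.cong refl) simp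
    also have "\<dots> = (\<Sum>b\<in>B. (b \<bullet> x) *\<^sub>R (A *v b))"
      using m_nonneg by (intro sum.cong refl) (simp add: Ab mult.assoc[symmetric])
    also have "\<dots> = A *v x"
      using linear_sum[OF matrix_vector_mul_linear, of A "\<lambda>b. (b \<bullet> x) *\<^sub>R b" B] expand[of x]
      by (simp add: matrix_vector_mult_scaleR)
    finally show ?thesis .
  qed
  hence "S ** S = A" by (simp add: matrix_eq matrix_vector_mul_assoc)
  ultimately show ?thesis using that unfolding psd_matrix_def by blast
qed

text \<open>If \<open>D x = \<mu> x\<close> for \<open>D = S - T\<close>, then \<open>0 = x\<^sup>T (S D + D T) x = \<mu> (x\<^sup>T S x + x\<^sup>T T x)\<close>,
  so every eigenvalue of the symmetric matrix \<open>D\<close> vanishes.\<close>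
lemma psd_matrix_sqrt_unique:
  fixes S T :: "real^'n^'n"
  assumes S: "psd_matrix S" and T: "psd_matrix T" and eq: "S ** S = T ** T"
  shows "S = T"
proof -
  have sS: "transpose S = S" and pS: "\<And>x. 0 \<le> x \<bullet> (S *v x)"
    and sT: "transpose T = T" and pT: "\<And>x. 0 \<le> x \<bullet> (T *v x)"
    using S T unfolding psd_matrix_def by auto
  define D where "D = S - T"
  have sD: "transpose D = D" unfolding D_def using sS sT by (simp add: transpose_def vec_eq_iff)
  have Dv: "D *v x = S *v x - T *v x" for x unfolding D_def by (simp add: matrix_vector_mult_diff_rdistrib)
  have eigen_zero: "D *v x = 0" if x: "D *v x = \<mu> *\<^sub>R x" for x \<mu>
  proof -
    have "S *v (S *v x) = T *v (T *v x)"
      using arg_cong[OF eq, of "\<lambda>M. M *v x"] by (simp add: matrix_vector_mul_assoc)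
    hence "x \<bullet> (S *v (D *v x)) + (D *v x) \<bullet> (T *v x) = 0"
      using symmetric_matrix_inner_commute[OF sS, of x "T *v x"]
        symmetric_matrix_inner_commute[OF sT, of x "T *v x"]
      by (simp add: Dv matrix_vector_mult_diff_distrib inner_diff_left inner_diff_right inner_commute)
    hence "\<mu> * (x \<bullet> (S *v x) + x \<bullet> (T *v x)) = 0"
      unfolding x by (simp add: matrix_vector_mult_scaleR algebra_simps)
    moreover have "S *v x = 0 \<and> T *v x = 0" if "x \<bullet> (S *v x) + x \<bullet> (T *v x) = 0"
      using that pS[of x] pT[of x] psd_matrix_mult_vector_eq_0[OF S] psd_matrix_mult_vector_eq_0[OF T]
      by (simp add: add_nonneg_eq_0_iff)
    ultimately show ?thesis using x by (auto simp: Dv)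
  qed
  obtain B where B: "orthonormal_eigenvectors D B" and expand: "\<And>v. v = (\<Sum>b\<in>B. (b \<bullet> v) *\<^sub>R b)"
    using symmetric_matrix_orthonormal_eigenbasis[OF sD] by blast
  have "D *v v = 0" for v
  proof -
    have "D *v v = (\<Sum>b\<in>B. (b \<bullet> v) *\<^sub>R (D *v b))"
      using linear_sum[OF matrix_vector_mul_linear, of D "\<lambda>b. (b \<bullet> v) *\<^sub>R b" B] expand[of v]
      by (simp add: matrix_vector_mult_scaleR)
    also have "\<dots> = 0"
      using B eigen_zero unfolding orthonormal_eigenvectors_def by (intro sum.neutral) auto
    finally show ?thesis .
  qed
  hence "D = 0" by (simp add: matrix_eq)
  thus ?thesis unfolding D_def by simp
qed

lemma matrix_sqrt:
  fixes A :: "real^'n^'n"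
  assumes "psd_matrix A"
  shows "psd_matrix (matrix_sqrt A)" and "matrix_sqrt A ** matrix_sqrt A = A"
proof -
  obtain S where "psd_matrix S" "S ** S = A" using psd_matrix_sqrt_exists[OF assms] .
  hence "\<exists>!S. psd_matrix S \<and> S ** S = A" using psd_matrix_sqrt_unique by blast
  hence "psd_matrix (matrix_sqrt A) \<and> matrix_sqrt A ** matrix_sqrt A = A"
    unfolding matrix_sqrt_def by (rule theI')
  thus "psd_matrix (matrix_sqrt A)" "matrix_sqrt A ** matrix_sqrt A = A" by auto
qed

lemma trace_mult_transpose:
  fixes A :: "real^'n^'m"
  shows "trace (A ** transpose A) = (\<Sum>i\<in>UNIV. \<Sum>j\<in>UNIV. (A $ i $ j)\<^sup>2)"
  by (simp add: trace_def matrix_matrix_mult_def transpose_def power2_eq_square)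

section \<open>Second moments, Lipschitz functions and Gaussian vectors\<close>

lemma borel_measurable_vec_nth [measurable (raw)]:
  fixes f :: "'a \<Rightarrow> real^'n"
  shows "f \<in> borel_measurable M \<Longrightarrow> (\<lambda>x. f x $ i) \<in> borel_measurable M"
  by (rule measurable_compose[OF _ borel_measurable_nth])

lemma matrix_vector_mult_borel_measurable [measurable]:
  fixes A :: "real^'n^'m"
  shows "(*v) A \<in> borel_measurable borel"
  by (rule borel_measurable_continuous_onI[OF matrix_vector_mult_linear_continuous_on])

lemma covariance_matrix_psd:
  fixes W :: "'a \<Rightarrow> real^'n"
  assumes "\<And>i j. integrable M (\<lambda>x. W x $ i * W x $ j)"
  shows "psd_matrix (\<chi> i j. integral\<^sup>L M (\<lambda>x. W x $ i * W x $ j))" (is "psd_matrix ?\<Sigma>")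
proof -
  have "0 \<le> v \<bullet> (?\<Sigma> *v v)" for v
  proof -
    have "v \<bullet> (?\<Sigma> *v v) = (\<Sum>i\<in>UNIV. \<Sum>j\<in>UNIV. v $ i * v $ j * integral\<^sup>L M (\<lambda>x. W x $ i * W x $ j))"
      by (simp add: inner_vec_def matrix_vector_mult_def sum_distrib_left mult_ac)
    also have "\<dots> = integral\<^sup>L M (\<lambda>x. (\<Sum>i\<in>UNIV. v $ i * W x $ i)\<^sup>2)"
      using assms by (simp add: power2_eq_square sum_product mult_ac)
    also have "\<dots> \<ge> 0" by simp
    finally show ?thesis .
  qed
  moreover have "transpose ?\<Sigma> = ?\<Sigma>" by (simp add: transpose_def vec_eq_iff mult.commute)
  ultimately show ?thesis unfolding psd_matrix_def by blast
qed

lemma integrable_mult_of_square_integrable: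
  fixes f g :: "'a \<Rightarrow> real"
  assumes [measurable]: "f \<in> borel_measurable M" "g \<in> borel_measurable M"
    and "integrable M (\<lambda>x. (f x)\<^sup>2)" "integrable M (\<lambda>x. (g x)\<^sup>2)"
  shows "integrable M (\<lambda>x. f x * g x)"
proof (rule Bochner_Integration.integrable_bound[of _ "\<lambda>x. (f x)\<^sup>2 + (g x)\<^sup>2"])
  show "integrable M (\<lambda>x. (f x)\<^sup>2 + (g x)\<^sup>2)" using assms by simp
  have "\<bar>f x * g x\<bar> \<le> (f x)\<^sup>2 + (g x)\<^sup>2" for x
  proof -
    have "2 * (\<bar>f x\<bar> * \<bar>g x\<bar>) \<le> (f x)\<^sup>2 + (g x)\<^sup>2"
      using sum_squares_bound[of "\<bar>f x\<bar>" "\<bar>g x\<bar>"] by simp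
    thus ?thesis using abs_ge_zero[of "f x * g x"] unfolding abs_mult by linarith
  qed
  thus "AE x in M. norm (f x * g x) \<le> norm ((f x)\<^sup>2 + (g x)\<^sup>2)" by simp
qed simp

lemma (in finite_measure) integrable_norm_vec_of_square_integrable:
  fixes W :: "'a \<Rightarrow> real^'d"
  assumes [measurable]: "W \<in> borel_measurable M" and sq: "\<And>i. integrable M (\<lambda>x. (W x $ i)\<^sup>2)"
  shows "integrable M (\<lambda>x. norm (W x))"
proof (rule Bochner_Integration.integrable_bound[of _ "\<lambda>x. \<Sum>i\<in>UNIV. \<bar>W x $ i\<bar>"])
  have "integrable M (\<lambda>x. W x $ i)" for i by (rule square_integrable_imp_integrable[OF _ sq]) measurable
  thus "integrable M (\<lambda>x. \<Sum>i\<in>UNIV. \<bar>W x $ i\<bar>)" by auto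
  show "AE x in M. norm (norm (W x)) \<le> norm (\<Sum>i\<in>UNIV. \<bar>W x $ i\<bar>)"
    by (intro AE_I2) (simp add: norm_le_l1_cart)
qed simp

lemma (in prob_space) expectation_le_sqrt_second_moment:
  fixes f :: "'a \<Rightarrow> real"
  assumes "f \<in> borel_measurable M" "integrable M (\<lambda>x. (f x)\<^sup>2)"
  shows "expectation f \<le> sqrt (expectation (\<lambda>x. (f x)\<^sup>2))"
proof -
  have "integrable M f" using assms by (rule square_integrable_imp_integrable)
  hence "(expectation f)\<^sup>2 \<le> expectation (\<lambda>x. (f x)\<^sup>2)"
    using variance_eq[of f] variance_positive[of f] assms(2) by simp
  thus ?thesis by (rule real_le_rsqrt)
qed

lemma (in prob_space) sq_mult_prob_le_second_moment:
  fixes Y :: "'a \<Rightarrow> real"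
  assumes [measurable]: "Y \<in> borel_measurable M" and Y: "integrable M (\<lambda>x. (Y x)\<^sup>2)"
  shows "a\<^sup>2 * prob {x \<in> space M. Y x = a} \<le> expectation (\<lambda>x. (Y x)\<^sup>2)"
proof -
  define A where "A = {x \<in> space M. Y x = a}"
  have [measurable]: "A \<in> sets M" unfolding A_def by measurable
  have "a\<^sup>2 * prob A = expectation (\<lambda>x. a\<^sup>2 * indicator A x)" by simp
  also have "\<dots> = expectation (\<lambda>x. (Y x)\<^sup>2 * indicator A x)"
    by (rule Bochner_Integration.integral_cong) (auto simp: A_def indicator_def)
  also have "\<dots> \<le> expectation (\<lambda>x. (Y x)\<^sup>2)"
  proof (rule integral_mono[OF _ Y])
    show "integrable M (\<lambda>x. (Y x)\<^sup>2 * indicator A x)"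
      by (rule Bochner_Integration.integrable_bound[OF Y]) (auto simp: indicator_def)
  qed (auto simp: indicator_def)
  finally show ?thesis unfolding A_def .
qed

lemma (in prob_space) second_moment_pos:
  fixes Y :: "'a \<Rightarrow> real"
  assumes "Y \<in> borel_measurable M" "integrable M (\<lambda>x. (Y x)\<^sup>2)" "a \<noteq> b"
    and "prob {x \<in> space M. Y x = a} > 0" "prob {x \<in> space M. Y x = b} > 0"
  shows "expectation (\<lambda>x. (Y x)\<^sup>2) > 0"
proof -
  obtain c where "c \<noteq> 0" "prob {x \<in> space M. Y x = c} > 0" using assms(3-5) by metis
  hence "0 < c\<^sup>2 * prob {x \<in> space M. Y x = c}" by simp
  also have "\<dots> \<le> expectation (\<lambda>x. (Y x)\<^sup>2)" using assms(1,2) by (rule sq_mult_prob_le_second_moment)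
  finally show ?thesis .
qed

lemma (in prob_space) std_normal_vector_second_moments:
  fixes Z :: "'a \<Rightarrow> real^'d"
  assumes indep: "indep_vars (\<lambda>_. borel) (\<lambda>i x. Z x $ i) UNIV"
    and normal: "\<And>i. distributed M lborel (\<lambda>x. Z x $ i) std_normal_density"
  shows "integrable M (\<lambda>x. Z x $ i * Z x $ j)"
    and "expectation (\<lambda>x. Z x $ i * Z x $ j) = (if i = j then 1 else 0)"
proof -
  have int: "integrable M (\<lambda>x. Z x $ i)" for i
    using distributed_integrable[OF normal[of i], of "\<lambda>x. x"] integrable_std_normal_moment[of 1]
    by (simp add: normal_density_nonneg)
  have "integrable M (\<lambda>x. Z x $ i * Z x $ j) \<and>
        expectation (\<lambda>x. Z x $ i * Z x $ j) = (if i = j then 1 else 0)"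
  proof (cases "i = j")
    case True
    have "integrable M (\<lambda>x. (Z x $ i)\<^sup>2)"
      using distributed_integrable[OF normal[of i], of "\<lambda>x. x\<^sup>2"] integrable_std_normal_moment[of 2]
      by (simp add: normal_density_nonneg)
    moreover have "expectation (\<lambda>x. (Z x $ i)\<^sup>2) = 1"
      using distributed_integral[OF normal[of i], of "\<lambda>x. x\<^sup>2"] integral_std_normal_moment_even[of 1]
      by (simp add: normal_density_nonneg)
    ultimately show ?thesis using True by (simp add: power2_eq_square)
  next
    case False
    have ij: "indep_vars (\<lambda>_. borel) (\<lambda>i x. Z x $ i) {i, j}"
      by (rule indep_vars_subset[OF indep]) auto
    have "expectation (\<lambda>x. \<Prod>l\<in>{i, j}. Z x $ l) = (\<Prod>l\<in>{i, j}. expectation (\<lambda>x. Z x $ l))"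
      by (rule indep_vars_lebesgue_integral[OF _ ij]) (auto simp: int)
    moreover have "integrable M (\<lambda>x. \<Prod>l\<in>{i, j}. Z x $ l)"
      by (rule indep_vars_integrable[OF _ ij]) (auto simp: int)
    ultimately show ?thesis
      using False standard_normal_distributed_expectation[OF normal] by simp
  qed
  thus "integrable M (\<lambda>x. Z x $ i * Z x $ j)"
    and "expectation (\<lambda>x. Z x $ i * Z x $ j) = (if i = j then 1 else 0)" by auto
qed

lemma (in prob_space) expectation_norm_matrix_std_normal_le:
  fixes Z :: "'a \<Rightarrow> real^'d" and A :: "real^'d^'m"
  assumes [measurable]: "Z \<in> borel_measurable M"
    and indep: "indep_vars (\<lambda>_. borel) (\<lambda>i x. Z x $ i) UNIV"
    and normal: "\<And>i. distributed M lborel (\<lambda>x. Z x $ i) std_normal_density"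
  shows "integrable M (\<lambda>x. norm (A *v Z x))"
    and "expectation (\<lambda>x. norm (A *v Z x)) \<le> sqrt (trace (A ** transpose A))"
proof -
  note moments = std_normal_vector_second_moments[OF indep normal]
  have norm_meas: "(\<lambda>x. norm (A *v Z x)) \<in> borel_measurable M" by measurable
  have sq: "(norm (A *v Z x))\<^sup>2 =
      (\<Sum>i\<in>UNIV. \<Sum>j\<in>UNIV. \<Sum>l\<in>UNIV. A $ i $ j * A $ i $ l * (Z x $ j * Z x $ l))" for x
    by (simp add: power2_norm_eq_inner inner_vec_def matrix_vector_mult_def sum_product mult_ac)
  have sq_int: "integrable M (\<lambda>x. (norm (A *v Z x))\<^sup>2)"
    unfolding sq using moments(1) by (intro Bochner_Integration.integrable_sum integrable_mult_right)
  have "expectation (\<lambda>x. (norm (A *v Z x))\<^sup>2) = (\<Sum>i\<in>UNIV. \<Sum>j\<in>UNIV. (A $ i $ j)\<^sup>2)"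
    unfolding sq using moments(1)
    by (simp add: Bochner_Integration.integral_sum integrable_mult_right moments(2) power2_eq_square
        if_distrib cong: if_cong)
  also have "\<dots> = trace (A ** transpose A)" by (rule trace_mult_transpose[symmetric])
  finally have "expectation (\<lambda>x. (norm (A *v Z x))\<^sup>2) = trace (A ** transpose A)" .
  thus "expectation (\<lambda>x. norm (A *v Z x)) \<le> sqrt (trace (A ** transpose A))"
    using expectation_le_sqrt_second_moment[OF norm_meas sq_int] by simp
  show "integrable M (\<lambda>x. norm (A *v Z x))"
    using norm_meas sq_int by (rule square_integrable_imp_integrable)
qed

lemma lipschitz_on_borel_measurable:
  "C-lipschitz_on UNIV f \<Longrightarrow> f \<in> borel_measurable borel"
  by (rule borel_measurable_continuous_onI[OF lipschitz_on_continuous_on])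

lemma (in finite_measure) integrable_lipschitz_comp:
  fixes h :: "'b::real_normed_vector \<Rightarrow> real"
  assumes h: "C-lipschitz_on UNIV h"
    and [measurable]: "X \<in> borel_measurable M" and X: "integrable M (\<lambda>x. norm (X x))"
  shows "integrable M (\<lambda>x. h (X x))"
proof (rule Bochner_Integration.integrable_bound[of _ "\<lambda>x. \<bar>h 0\<bar> + C * norm (X x)"])
  show "integrable M (\<lambda>x. \<bar>h 0\<bar> + C * norm (X x))" using X by simp
  have "\<bar>h w\<bar> \<le> \<bar>h 0\<bar> + C * norm w" for w
    using lipschitz_onD[OF h, of w 0] by (simp add: dist_norm dist_real_def)
  thus "AE x in M. norm (h (X x)) \<le> norm (\<bar>h 0\<bar> + C * norm (X x))"
    using lipschitz_on_nonneg[OF h] by (intro AE_I2) (simp add: abs_of_nonneg)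
  show "(\<lambda>x. h (X x)) \<in> borel_measurable M"
    using lipschitz_on_borel_measurable[OF h] by measurable
qed

lemma (in prob_space) lipschitz_dist_expectation_le:
  fixes h :: "'b::real_normed_vector \<Rightarrow> real"
  assumes h: "C-lipschitz_on UNIV h"
    and [measurable]: "X \<in> borel_measurable M" and X: "integrable M (\<lambda>x. norm (X x))"
  shows "\<bar>h w - expectation (\<lambda>x. h (X x))\<bar> \<le> C * (norm w + expectation (\<lambda>x. norm (X x)))"
proof -
  have hX: "integrable M (\<lambda>x. h (X x))" by (rule integrable_lipschitz_comp[OF h _ X]) simp
  have "\<bar>h w - expectation (\<lambda>x. h (X x))\<bar> = \<bar>expectation (\<lambda>x. h w - h (X x))\<bar>"
    using hX by (simp add: prob_space)
  also have "\<dots> \<le> expectation (\<lambda>x. \<bar>h w - h (X x)\<bar>)" by (rule integral_abs_bound)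
  also have "\<dots> \<le> expectation (\<lambda>x. C * (norm w + norm (X x)))"
  proof (rule integral_mono)
    show "integrable M (\<lambda>x. \<bar>h w - h (X x)\<bar>)" using hX by auto
    show "integrable M (\<lambda>x. C * (norm w + norm (X x)))" using X by auto
    fix x
    have "\<bar>h w - h (X x)\<bar> \<le> C * norm (w - X x)"
      using lipschitz_onD[OF h, of w "X x"] by (simp add: dist_norm dist_real_def)
    also have "\<dots> \<le> C * (norm w + norm (X x))"
      using lipschitz_on_nonneg[OF h] norm_triangle_ineq4[of w "X x"] by (rule mult_left_mono[rotated])
    finally show "\<bar>h w - h (X x)\<bar> \<le> C * (norm w + norm (X x))" .
  qed
  also have "\<dots> = C * (norm w + expectation (\<lambda>x. norm (X x)))"
    using X by (simp add: prob_space)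
  finally show ?thesis .
qed

lemma (in prob_space) lipschitz_comp_gaussian:
  fixes Z :: "'a \<Rightarrow> real^'d" and \<Sigma> :: "real^'d^'d" and h :: "real^'d \<Rightarrow> real"
  assumes Z [measurable]: "Z \<in> borel_measurable M"
    and indep: "indep_vars (\<lambda>_. borel) (\<lambda>i x. Z x $ i) UNIV"
    and normal: "\<And>i. distributed M lborel (\<lambda>x. Z x $ i) std_normal_density"
    and h: "1-lipschitz_on UNIV h" and \<Sigma>: "psd_matrix \<Sigma>"
  shows "integrable M (\<lambda>x. h (matrix_sqrt \<Sigma> *v Z x))"
    and "\<bar>h w - expectation (\<lambda>x. h (matrix_sqrt \<Sigma> *v Z x))\<bar> \<le> norm w + sqrt (trace \<Sigma>)"
proof -
  define S where "S = matrix_sqrt \<Sigma>"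
  have "transpose S = S" and "S ** S = \<Sigma>"
    using matrix_sqrt[OF \<Sigma>] unfolding S_def psd_matrix_def by auto
  hence trace: "trace (S ** transpose S) = trace \<Sigma>" by simp
  note SZ = expectation_norm_matrix_std_normal_le[OF Z indep normal, of S]
  show "integrable M (\<lambda>x. h (matrix_sqrt \<Sigma> *v Z x))"
    unfolding S_def[symmetric] by (rule integrable_lipschitz_comp[OF h _ SZ(1)]) simp
  show "\<bar>h w - expectation (\<lambda>x. h (matrix_sqrt \<Sigma> *v Z x))\<bar> \<le> norm w + sqrt (trace \<Sigma>)"
    using lipschitz_dist_expectation_le[OF h _ SZ(1), of w] SZ(2) unfolding S_def[symmetric] trace
    by simp
qed

section \<open>Independence, conditioning and equality in distribution\<close>

lemma (in prob_space) indep_var_comp_of_indep_set_vimage_algebra: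
  assumes indep: "indep_set (sets (vimage_algebra (space M) X S)) (sets (vimage_algebra (space M) Y T))"
    and X: "X \<in> M \<rightarrow>\<^sub>M S" and Y: "Y \<in> M \<rightarrow>\<^sub>M T" and f: "f \<in> S \<rightarrow>\<^sub>M N" and g: "g \<in> T \<rightarrow>\<^sub>M N"
  shows "indep_var N (\<lambda>x. f (X x)) N (\<lambda>x. g (Y x))"
proof -
  have sub: "sigma_sets (space M) {(\<lambda>x. h (V x)) -` A \<inter> space M | A. A \<in> sets N}
      \<subseteq> sets (vimage_algebra (space M) V R)"
    if V: "V \<in> M \<rightarrow>\<^sub>M R" and h: "h \<in> R \<rightarrow>\<^sub>M N" for V :: "'a \<Rightarrow> 'e" and R h
  proof (rule sets.sigma_sets_subset'[OF _ sets_vimage_algebra_space], safe)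
    fix A assume "A \<in> sets N"
    hence "V -` (h -` A \<inter> space R) \<inter> space M \<in> sets (vimage_algebra (space M) V R)"
      using h by (intro in_vimage_algebra measurable_sets)
    moreover have "V -` (h -` A \<inter> space R) \<inter> space M = (\<lambda>x. h (V x)) -` A \<inter> space M"
      using V by (auto dest: measurable_space)
    ultimately show "(\<lambda>x. h (V x)) -` A \<inter> space M \<in> sets (vimage_algebra (space M) V R)" by simp
  qed
  show ?thesis
    unfolding indep_var_eq
  proof (intro conjI)
    show "random_variable N (\<lambda>x. f (X x))" "random_variable N (\<lambda>x. g (Y x))"
      using X Y f g by measurable
    show "indep_set (sigma_sets (space M) {(\<lambda>x. f (X x)) -` A \<inter> space M |A. A \<in> sets N})
        (sigma_sets (space M) {(\<lambda>x. g (Y x)) -` A \<inter> space M |A. A \<in> sets N})"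
      using indep sub[OF X f] sub[OF Y g] unfolding indep_sets2_eq by blast
  qed
qed

lemma (in prob_space) expectation_diff_mult_indep:
  fixes U V \<phi> :: "'a \<Rightarrow> real"
  assumes indep: "indep_var borel V borel \<phi>"
    and U: "integrable M U" and V: "integrable M V" and \<phi>: "\<And>x. \<bar>\<phi> x\<bar> \<le> 1"
  shows "expectation (\<lambda>x. (U x - V x) * \<phi> x) = expectation (\<lambda>x. (U x - expectation V) * \<phi> x)"
proof -
  have [measurable]: "\<phi> \<in> borel_measurable M" using indep by (rule indep_var_rv2)
  have \<phi>_int: "integrable M \<phi>"
    using \<phi> by (intro integrable_const_bound[of _ 1]) auto
  have U\<phi>: "integrable M (\<lambda>x. U x * \<phi> x)"
    using U \<phi> by (intro Bochner_Integration.integrable_bound[OF U]) (auto simp: abs_mult intro!: mult_left_le)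
  have "expectation (\<lambda>x. V x * \<phi> x) = expectation V * expectation \<phi>"
    by (rule indep_var_lebesgue_integral[OF indep V \<phi>_int])
  moreover have "integrable M (\<lambda>x. V x * \<phi> x)"
    by (rule indep_var_integrable[OF indep V \<phi>_int])
  ultimately show ?thesis using U\<phi> \<phi>_int by (simp add: left_diff_distrib)
qed

lemma (in prob_space) sigma_finite_subalgebra_vimage_algebra:
  assumes "X \<in> M \<rightarrow>\<^sub>M N"
  shows "sigma_finite_subalgebra M (vimage_algebra (space M) X N)"
proof -
  have "subalgebra M (vimage_algebra (space M) X N)"
    unfolding subalgebra_def using assms by (auto simp: sets_vimage_algebra2 measurable_def)
  thus ?thesis by (intro finite_measure_subalgebra_is_sigma_finite) unfold_locales
qed

lemma (in sigma_finite_subalgebra) integral_mult_real_cond_exp_AE: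
  fixes f g q :: "'a \<Rightarrow> real"
  assumes fg: "integrable M (\<lambda>x. f x * g x)" and f: "f \<in> borel_measurable F"
    and g: "g \<in> borel_measurable M" and q: "q \<in> borel_measurable M"
    and ce: "AE x in M. real_cond_exp M F g x = q x"
  shows "integrable M (\<lambda>x. f x * q x)" and "(\<integral>x. f x * q x \<partial>M) = (\<integral>x. f x * g x \<partial>M)"
proof -
  have [measurable]: "f \<in> borel_measurable M" by (rule measurable_from_subalg[OF subalg f])
  have AE: "AE x in M. f x * real_cond_exp M F g x = f x * q x" using ce by auto
  show "integrable M (\<lambda>x. f x * q x)"
    by (rule integrable_cong_AE_imp[OF real_cond_exp_intg(1)[OF fg f g] _ AE]) (use q in measurable)
  show "(\<integral>x. f x * q x \<partial>M) = (\<integral>x. f x * g x \<partial>M)"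
    using real_cond_exp_intg(2)[OF fg f g] integral_cong_AE[OF _ _ AE] q by simp
qed

lemma integral_comp_eq_of_distr_eq:
  fixes \<psi> :: "'b \<Rightarrow> real"
  assumes eq: "distr M N V = distr M N V'" and V: "V \<in> M \<rightarrow>\<^sub>M N" and V': "V' \<in> M \<rightarrow>\<^sub>M N"
    and \<psi>: "\<psi> \<in> borel_measurable N"
  shows "integrable M (\<lambda>x. \<psi> (V x)) \<longleftrightarrow> integrable M (\<lambda>x. \<psi> (V' x))"
    and "(\<integral>x. \<psi> (V x) \<partial>M) = (\<integral>x. \<psi> (V' x) \<partial>M)"
  using integrable_distr_eq[OF V \<psi>] integrable_distr_eq[OF V' \<psi>]
    integral_distr[OF V \<psi>] integral_distr[OF V' \<psi>] eq by metis+

section \<open>Exchangeable pairs with unit jumps\<close>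

lemma (in prob_space) expectation_jump_cond_exp:
  fixes W :: "'a \<Rightarrow> 'b::second_countable_topology" and Y Y' R :: "'a \<Rightarrow> real"
    and g :: "'b \<Rightarrow> real" and Q s j :: real
  assumes [measurable]: "W \<in> borel_measurable M" "Y \<in> borel_measurable M"
      "Y' \<in> borel_measurable M" "R \<in> borel_measurable M" "g \<in> borel_measurable borel"
    and g_int: "integrable M (\<lambda>x. g (W x))"
    and cond: "AE x in M. real_cond_exp M (vimage_algebra (space M) (\<lambda>x. (W x, Y x)) borel)
                 (indicator {x \<in> space M. Y' x - Y x = s}) x = Q + R x"
  shows "integrable M (\<lambda>x. g (W x) * (if Y x = j then 1 else 0) * R x)"
    and "Q * expectation (\<lambda>x. g (W x) * (if Y x = j then 1 else 0))
           + expectation (\<lambda>x. g (W x) * (if Y x = j then 1 else 0) * R x)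
         = expectation (\<lambda>x. g (W x) * (if Y x = j \<and> Y' x = j + s then 1 else 0))"
proof -
  define F where "F = vimage_algebra (space M) (\<lambda>x. (W x, Y x)) borel"
  define f where "f x = g (W x) * (if Y x = j then 1 else 0)" for x
  have WY: "(\<lambda>x. (W x, Y x)) \<in> M \<rightarrow>\<^sub>M borel" unfolding borel_prod[symmetric] by measurable
  interpret F: sigma_finite_subalgebra M F
    unfolding F_def by (rule sigma_finite_subalgebra_vimage_algebra[OF WY])
  have "(\<lambda>p. g (fst p) * (if snd p = j then 1 else 0)) \<in> borel_measurable (borel :: ('b \<times> real) measure)"
    unfolding borel_prod[symmetric] by measurable
  hence fF: "f \<in> borel_measurable F"
    using measurable_vimage_algebra1[of "\<lambda>x. (W x, Y x)" "space M" borel] WY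
    unfolding F_def f_def[abs_def] by (auto dest: measurable_compose[rotated] simp: measurable_space)
  have f_int: "integrable M (\<lambda>x. f x * c x)" if "\<And>x. \<bar>c x\<bar> \<le> 1" "c \<in> borel_measurable M" for c
    using that by (intro Bochner_Integration.integrable_bound[OF g_int])
      (auto simp: f_def abs_mult intro!: mult_left_le)
  have "integrable M (\<lambda>x. f x * indicator {x \<in> space M. Y' x - Y x = s} x)" by (rule f_int) auto
  note ce = F.integral_mult_real_cond_exp_AE[OF this fF _ _ cond[folded F_def]]
  have QR: "integrable M (\<lambda>x. f x * (Q + R x))" by (rule ce(1)) auto
  have "integrable M (\<lambda>x. f x * (Q + R x) - Q * f x)" using QR f_int[of "\<lambda>_. 1"] by simp
  hence fR: "integrable M (\<lambda>x. f x * R x)" by (simp add: algebra_simps)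
  thus "integrable M (\<lambda>x. g (W x) * (if Y x = j then 1 else 0) * R x)" by (simp add: f_def)
  have "Q * expectation f + expectation (\<lambda>x. f x * R x) = expectation (\<lambda>x. f x * (Q + R x))"
    using fR f_int[of "\<lambda>_. 1"] by (simp add: distrib_left)
  also have "\<dots> = expectation (\<lambda>x. f x * indicator {x \<in> space M. Y' x - Y x = s} x)"
    by (rule ce(2)) auto
  also have "\<dots> = expectation (\<lambda>x. g (W x) * (if Y x = j \<and> Y' x = j + s then 1 else 0))"
    by (rule Bochner_Integration.integral_cong) (auto simp: f_def indicator_def)
  finally show "Q * expectation (\<lambda>x. g (W x) * (if Y x = j then 1 else 0))
           + expectation (\<lambda>x. g (W x) * (if Y x = j then 1 else 0) * R x)
         = expectation (\<lambda>x. g (W x) * (if Y x = j \<and> Y' x = j + s then 1 else 0))"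
    by (simp add: f_def[abs_def])
qed

lemma exchangeable_pair_swap:
  fixes W W' :: "'a \<Rightarrow> 'b::second_countable_topology" and Y Y' :: "'a \<Rightarrow> real"
    and g :: "'b \<Rightarrow> real"
  assumes [measurable]: "W \<in> borel_measurable M" "W' \<in> borel_measurable M"
      "Y \<in> borel_measurable M" "Y' \<in> borel_measurable M" "g \<in> borel_measurable borel"
    and exch: "distr M borel (\<lambda>x. (W x, Y x, W' x, Y' x))
               = distr M borel (\<lambda>x. (W' x, Y' x, W x, Y x))"
  shows "integrable M (\<lambda>x. g (W x) * (if Y x = a \<and> Y' x = b then 1 else 0))
     \<longleftrightarrow> integrable M (\<lambda>x. g (W' x) * (if Y x = b \<and> Y' x = a then 1 else 0))"
    and "(\<integral>x. g (W x) * (if Y x = a \<and> Y' x = b then 1 else 0) \<partial>M)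
       = (\<integral>x. g (W' x) * (if Y x = b \<and> Y' x = a then 1 else 0) \<partial>M)"
proof -
  define \<psi> where "\<psi> = (\<lambda>(w, y, w' :: 'b, y'). g w * (if y = a \<and> y' = b then 1 else (0::real)))"
  have "(\<lambda>x. (W x, Y x, W' x, Y' x)) \<in> M \<rightarrow>\<^sub>M borel" "(\<lambda>x. (W' x, Y' x, W x, Y x)) \<in> M \<rightarrow>\<^sub>M borel"
    and "\<psi> \<in> borel_measurable borel"
    unfolding \<psi>_def borel_prod[symmetric] by measurable
  from integral_comp_eq_of_distr_eq[OF exch this]
  show "integrable M (\<lambda>x. g (W x) * (if Y x = a \<and> Y' x = b then 1 else 0))
     \<longleftrightarrow> integrable M (\<lambda>x. g (W' x) * (if Y x = b \<and> Y' x = a then 1 else 0))"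
    and "(\<integral>x. g (W x) * (if Y x = a \<and> Y' x = b then 1 else 0) \<partial>M)
       = (\<integral>x. g (W' x) * (if Y x = b \<and> Y' x = a then 1 else 0) \<partial>M)"
    by (simp_all add: \<psi>_def conj_commute)
qed

text \<open>Up-jumps from level \<open>k - 1\<close> and down-jumps from level \<open>k\<close> are exchanged by the
  symmetry of the pair, up to replacing \<open>W\<close> by \<open>W'\<close>.\<close>
lemma (in prob_space) exchangeable_pair_jump_identity:
  fixes W W' :: "'a \<Rightarrow> 'b::second_countable_topology" and Y Y' Rp Rm :: "'a \<Rightarrow> real"
    and g :: "'b \<Rightarrow> real" and Q k :: real
  assumes meas [measurable]: "W \<in> borel_measurable M" "W' \<in> borel_measurable M"
      "Y \<in> borel_measurable M" "Y' \<in> borel_measurable M"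
      "Rp \<in> borel_measurable M" "Rm \<in> borel_measurable M" "g \<in> borel_measurable borel"
    and g_int: "integrable M (\<lambda>x. g (W x))"
    and exch: "distr M borel (\<lambda>x. (W x, Y x, W' x, Y' x))
               = distr M borel (\<lambda>x. (W' x, Y' x, W x, Y x))"
    and cond_p: "AE x in M. real_cond_exp M (vimage_algebra (space M) (\<lambda>x. (W x, Y x)) borel)
                   (indicator {x \<in> space M. Y' x - Y x = 1}) x = Q + Rp x"
    and cond_m: "AE x in M. real_cond_exp M (vimage_algebra (space M) (\<lambda>x. (W x, Y x)) borel)
                   (indicator {x \<in> space M. Y' x - Y x = -1}) x = Q + Rm x"
  shows "Q * expectation (\<lambda>x. g (W x) * ((if Y x = k then 1 else 0) - (if Y x = k - 1 then 1 else 0)))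
       = expectation (\<lambda>x. g (W x) * ((if Y x = k - 1 then Rp x else 0) - (if Y x = k then Rm x else 0)))
         - expectation (\<lambda>x. (g (W' x) - g (W x)) * (if Y x = k \<and> Y' x = k - 1 then 1 else 0))"
proof -
  define f where "f j = (\<lambda>x. g (W x) * (if Y x = j then 1 else (0::real)))" for j
  define swapped where "swapped G = (\<lambda>x. G x * (if Y x = k \<and> Y' x = k - 1 then 1 else (0::real)))"
    for G :: "'a \<Rightarrow> real"
  note up = expectation_jump_cond_exp[OF meas(1,3,4,5,7) g_int cond_p, of "k - 1", folded f_def]
  note down = expectation_jump_cond_exp[OF meas(1,3,4,6,7) g_int cond_m, of k, folded f_def]
  note swap = exchangeable_pair_swap[OF meas(1-4,7) exch, of "k - 1" k]
  have f_int: "integrable M (f j)" for j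
    using g_int by (intro Bochner_Integration.integrable_bound[OF g_int]) (auto simp: f_def)
  have down_int: "integrable M (swapped (\<lambda>x. g (W x)))"
    using g_int unfolding swapped_def by (intro Bochner_Integration.integrable_bound[OF g_int]) auto
  have up_int: "integrable M (swapped (\<lambda>x. g (W' x)))"
    using swap(1) g_int unfolding swapped_def
    by (auto intro: Bochner_Integration.integrable_bound[OF g_int])
  have "Q * expectation (\<lambda>x. g (W x) * ((if Y x = k then 1 else 0) - (if Y x = k - 1 then 1 else 0)))
      = Q * expectation (f k) - Q * expectation (f (k - 1))"
    using f_int by (simp add: f_def right_diff_distrib)
  also have "\<dots> = (expectation (\<lambda>x. f (k - 1) x * Rp x) - expectation (\<lambda>x. f k x * Rm x))
      - (expectation (swapped (\<lambda>x. g (W' x))) - expectation (swapped (\<lambda>x. g (W x))))"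
    using up(2) down(2) swap(2) unfolding swapped_def by (simp add: f_def)
  also have "\<dots> = expectation (\<lambda>x. g (W x) * ((if Y x = k - 1 then Rp x else 0) - (if Y x = k then Rm x else 0)))
         - expectation (\<lambda>x. (g (W' x) - g (W x)) * (if Y x = k \<and> Y' x = k - 1 then 1 else 0))"
  proof -
    have "expectation (\<lambda>x. f (k - 1) x * Rp x) - expectation (\<lambda>x. f k x * Rm x)
        = expectation (\<lambda>x. f (k - 1) x * Rp x - f k x * Rm x)"
      using up(1) down(1) by (simp add: f_def)
    moreover have "expectation (swapped (\<lambda>x. g (W' x))) - expectation (swapped (\<lambda>x. g (W x)))
        = expectation (\<lambda>x. swapped (\<lambda>x. g (W' x)) x - swapped (\<lambda>x. g (W x)) x)"
      using up_int down_int by simp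
    ultimately show ?thesis
      by (simp only:) (intro arg_cong2[where f = "(-)"] Bochner_Integration.integral_cong refl,
          auto simp: f_def swapped_def)
  qed
  finally show ?thesis .
qed

lemma abs_integral_le_nn_integral:
  fixes f :: "'a \<Rightarrow> real"
  shows "ennreal \<bar>integral\<^sup>L M f\<bar> \<le> (\<integral>\<^sup>+x. ennreal \<bar>f x\<bar> \<partial>M)"
  using integral_norm_bound_ennreal[of M f] by (cases "integrable M f") (auto simp: not_integrable_integral_eq)

lemma (in prob_space) exchangeable_pair_jump_bound:
  fixes W W' :: "'a \<Rightarrow> 'b::{real_normed_vector, second_countable_topology}"
    and Y Y' Rp Rm :: "'a \<Rightarrow> real" and g G :: "'b \<Rightarrow> real" and Q k :: real
  assumes [measurable]: "W \<in> borel_measurable M" "W' \<in> borel_measurable M"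
      "Y \<in> borel_measurable M" "Y' \<in> borel_measurable M"
      "Rp \<in> borel_measurable M" "Rm \<in> borel_measurable M"
    and g: "1-lipschitz_on UNIV g" and g_int: "integrable M (\<lambda>x. g (W x))"
    and G: "\<And>w. \<bar>g w\<bar> \<le> G w" and Q: "Q > 0"
    and exch: "distr M borel (\<lambda>x. (W x, Y x, W' x, Y' x))
               = distr M borel (\<lambda>x. (W' x, Y' x, W x, Y x))"
    and cond_p: "AE x in M. real_cond_exp M (vimage_algebra (space M) (\<lambda>x. (W x, Y x)) borel)
                   (indicator {x \<in> space M. Y' x - Y x = 1}) x = Q + Rp x"
    and cond_m: "AE x in M. real_cond_exp M (vimage_algebra (space M) (\<lambda>x. (W x, Y x)) borel)
                   (indicator {x \<in> space M. Y' x - Y x = -1}) x = Q + Rm x"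
  shows "ennreal \<bar>expectation (\<lambda>x. g (W x) * ((if Y x = k then 1 else 0) - (if Y x = k - 1 then 1 else 0)))\<bar>
    \<le> ennreal (1 / Q) * (\<integral>\<^sup>+ x. ennreal (norm (W' x - W x) * (if Y x \<in> {k - 1, k} then 1 else 0)) \<partial>M)
      + ennreal (1 / Q) * (\<integral>\<^sup>+ x. ennreal (G (W x) * (\<bar>Rp x\<bar> + \<bar>Rm x\<bar>) *
          (if Y x \<in> {k - 1, k} then 1 else 0)) \<partial>M)"
    (is "ennreal \<bar>?L\<bar> \<le> ennreal (1 / Q) * ?Jump + ennreal (1 / Q) * ?Rest")
proof -
  note lipschitz_on_borel_measurable[OF g, measurable]
  define E where "E = expectation
    (\<lambda>x. g (W x) * ((if Y x = k - 1 then Rp x else 0) - (if Y x = k then Rm x else 0)))"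
  define D where "D = expectation
    (\<lambda>x. (g (W' x) - g (W x)) * (if Y x = k \<and> Y' x = k - 1 then 1 else 0))"
  have QL: "Q * ?L = E - D"
    unfolding E_def D_def by (rule exchangeable_pair_jump_identity[OF _ _ _ _ _ _ _ g_int exch cond_p cond_m]) simp_all
  have E: "ennreal \<bar>E\<bar> \<le> ?Rest"
    unfolding E_def
  proof (rule order_trans[OF abs_integral_le_nn_integral nn_integral_mono], rule ennreal_leI)
    fix x
    have "\<bar>(if Y x = k - 1 then Rp x else 0) - (if Y x = k then Rm x else 0)\<bar>
        \<le> (\<bar>Rp x\<bar> + \<bar>Rm x\<bar>) * (if Y x \<in> {k - 1, k} then 1 else 0)"
      by auto
    hence "\<bar>g (W x)\<bar> * \<bar>(if Y x = k - 1 then Rp x else 0) - (if Y x = k then Rm x else 0)\<bar>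
        \<le> G (W x) * ((\<bar>Rp x\<bar> + \<bar>Rm x\<bar>) * (if Y x \<in> {k - 1, k} then 1 else 0))"
      using G by (intro mult_mono) (auto intro: order_trans[OF abs_ge_zero])
    thus "\<bar>g (W x) * ((if Y x = k - 1 then Rp x else 0) - (if Y x = k then Rm x else 0))\<bar>
        \<le> G (W x) * (\<bar>Rp x\<bar> + \<bar>Rm x\<bar>) * (if Y x \<in> {k - 1, k} then 1 else 0)"
      by (simp add: abs_mult mult.assoc)
  qed
  have D: "ennreal \<bar>D\<bar> \<le> ?Jump"
    unfolding D_def
  proof (rule order_trans[OF abs_integral_le_nn_integral nn_integral_mono], rule ennreal_leI)
    fix x
    have "\<bar>g (W' x) - g (W x)\<bar> \<le> norm (W' x - W x)"
      using lipschitz_onD[OF g, of "W' x" "W x"] by (simp add: dist_norm dist_real_def)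
    thus "\<bar>(g (W' x) - g (W x)) * (if Y x = k \<and> Y' x = k - 1 then 1 else 0)\<bar>
        \<le> norm (W' x - W x) * (if Y x \<in> {k - 1, k} then 1 else 0)"
      by (cases "Y x = k \<and> Y' x = k - 1") simp_all
  qed
  have "ennreal \<bar>Q * ?L\<bar> \<le> ennreal (\<bar>E\<bar> + \<bar>D\<bar>)"
    unfolding QL by (rule ennreal_leI) (rule abs_triangle_ineq4)
  also have "\<dots> = ennreal \<bar>E\<bar> + ennreal \<bar>D\<bar>" by (rule ennreal_plus) auto
  also have "\<dots> \<le> ?Rest + ?Jump" using E D by (rule add_mono)
  finally have "ennreal \<bar>Q * ?L\<bar> \<le> ?Jump + ?Rest" by (simp add: add.commute)
  hence "ennreal (1 / Q) * ennreal \<bar>Q * ?L\<bar> \<le> ennreal (1 / Q) * (?Jump + ?Rest)"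
    by (rule mult_left_mono) simp
  moreover have "ennreal (1 / Q) * ennreal \<bar>Q * ?L\<bar> = ennreal \<bar>?L\<bar>"
    using Q by (simp add: ennreal_mult[symmetric] abs_mult)
  ultimately show ?thesis by (simp add: distrib_left)
qed

lemma (in prob_space) exchangeable_pair_gaussian_bound:
  fixes W W' Z :: "'a \<Rightarrow> real^'d" and Y Y' Rp Rm :: "'a \<Rightarrow> real" and \<Sigma> :: "real^'d^'d"
    and h :: "real^'d \<Rightarrow> real" and Q k :: real
  assumes meas [measurable]: "W \<in> borel_measurable M" "W' \<in> borel_measurable M"
      "Y \<in> borel_measurable M" "Y' \<in> borel_measurable M"
      "Rp \<in> borel_measurable M" "Rm \<in> borel_measurable M" "Z \<in> borel_measurable M"
    and W_sq: "\<And>i. integrable M (\<lambda>x. (W x $ i)\<^sup>2)"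
    and \<Sigma>: "\<Sigma> = (\<chi> i j. expectation (\<lambda>x. W x $ i * W x $ j))"
    and exch: "distr M borel (\<lambda>x. (W x, Y x, W' x, Y' x))
               = distr M borel (\<lambda>x. (W' x, Y' x, W x, Y x))"
    and cond_p: "AE x in M. real_cond_exp M (vimage_algebra (space M) (\<lambda>x. (W x, Y x)) borel)
                   (indicator {x \<in> space M. Y' x - Y x = 1}) x = Q + Rp x"
    and cond_m: "AE x in M. real_cond_exp M (vimage_algebra (space M) (\<lambda>x. (W x, Y x)) borel)
                   (indicator {x \<in> space M. Y' x - Y x = -1}) x = Q + Rm x"
    and Z_indep_coords: "indep_vars (\<lambda>_. borel) (\<lambda>i x. Z x $ i) UNIV"
    and Z_normal: "\<And>i. distributed M lborel (\<lambda>x. Z x $ i) std_normal_density"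
    and Z_indep: "indep_set (sets (vimage_algebra (space M) Z borel))
                   (sets (vimage_algebra (space M) (\<lambda>x. (W x, Y x, W' x, Y' x, Rp x, Rm x)) borel))"
    and h: "1-lipschitz_on UNIV h" and Q: "Q > 0"
  shows "ennreal \<bar>expectation (\<lambda>x. (h (W x) - h (matrix_sqrt \<Sigma> *v Z x)) *
                 ((if Y x = k then 1 else 0) - (if Y x = k - 1 then 1 else 0)))\<bar>
           \<le> ennreal (1 / Q) * (\<integral>\<^sup>+ x. ennreal (norm (W' x - W x) *
                   (if Y x \<in> {k - 1, k} then 1 else 0)) \<partial>M)
             + ennreal (1 / Q) * (\<integral>\<^sup>+ x. ennreal ((norm (W x) + sqrt (trace \<Sigma>)) *
                   (\<bar>Rp x\<bar> + \<bar>Rm x\<bar>) * (if Y x \<in> {k - 1, k} then 1 else 0)) \<partial>M)"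
proof -
  have "psd_matrix \<Sigma>"
    unfolding \<Sigma> by (intro covariance_matrix_psd integrable_mult_of_square_integrable W_sq) measurable
  note gaussian = lipschitz_comp_gaussian[OF meas(7) Z_indep_coords Z_normal h this]
  define c where "c = expectation (\<lambda>x. h (matrix_sqrt \<Sigma> *v Z x))"
  note lipschitz_on_borel_measurable[OF h, measurable]
  have hW: "integrable M (\<lambda>x. h (W x))"
    using integrable_norm_vec_of_square_integrable[OF meas(1) W_sq]
    by (rule integrable_lipschitz_comp[OF h meas(1)])
  have "(\<lambda>x. (W x, Y x, W' x, Y' x, Rp x, Rm x)) \<in> M \<rightarrow>\<^sub>M borel"
    and "(\<lambda>(w, y, _). (if y = k then 1 else 0) - (if y = k - 1 then 1 else 0 :: real))
      \<in> (borel :: ((real^'d) \<times> real \<times> (real^'d) \<times> real \<times> real \<times> real) measure) \<rightarrow>\<^sub>M borel"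
    and "(\<lambda>v. h (matrix_sqrt \<Sigma> *v v)) \<in> borel_measurable borel"
    unfolding borel_prod[symmetric] by measurable
  from indep_var_comp_of_indep_set_vimage_algebra[OF Z_indep meas(7) this(1) this(3) this(2)]
  have "indep_var borel (\<lambda>x. h (matrix_sqrt \<Sigma> *v Z x))
      borel (\<lambda>x. (if Y x = k then 1 else 0) - (if Y x = k - 1 then 1 else 0))"
    by simp
  note centred = expectation_diff_mult_indep[OF this hW gaussian(1)]
  have "1-lipschitz_on UNIV (\<lambda>w. h w - c)" using lipschitz_on_diff[OF h lipschitz_on_constant] by simp
  from exchangeable_pair_jump_bound[OF meas(1-6) this _ gaussian(2)[folded c_def] Q exch cond_p cond_m]
  show ?thesis using hW centred unfolding c_def by simp
qed

theorem lemma5p1: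
  fixes M :: "'a measure"
    and W W' :: "'a \<Rightarrow> real^'d"
    and Y Y' Rp Rm :: "'a \<Rightarrow> real"
    and Z :: "'a \<Rightarrow> real^'d"
    and \<Sigma> :: "real^'d^'d"
    and \<sigma>Y2 \<zeta> lam Q :: real
  assumes M: "prob_space M"
    and meas: "W \<in> borel_measurable M" "W' \<in> borel_measurable M"
              "Y \<in> borel_measurable M" "Y' \<in> borel_measurable M"
              "Rp \<in> borel_measurable M" "Rm \<in> borel_measurable M"
              "Z \<in> borel_measurable M"
    and W_sq: "\<And>i. integrable M (\<lambda>x. (W x $ i)\<^sup>2)"
    and W_mean: "\<And>i. integral\<^sup>L M (\<lambda>x. W x $ i) = 0"
    and Sigma_def: "\<Sigma> = (\<chi> i j. integral\<^sup>L M (\<lambda>x. W x $ i * W x $ j))"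
    and Sigma_inv: "invertible \<Sigma>"
    and Y_sq: "integrable M (\<lambda>x. (Y x)\<^sup>2)"
    and Y_mean: "integral\<^sup>L M Y = 0"
    and Y_var: "\<sigma>Y2 = integral\<^sup>L M (\<lambda>x. (Y x)\<^sup>2)"
    and uncorr: "\<And>i. integral\<^sup>L M (\<lambda>x. W x $ i * Y x) = 0"
    and exch: "distr M borel (\<lambda>x. (W x, Y x, W' x, Y' x))
               = distr M borel (\<lambda>x. (W' x, Y' x, W x, Y x))"
    and zeta: "0 \<le> \<zeta>" "\<zeta> < 1"
    and lattice: "AE x in M. Y x - \<zeta> \<in> \<int>"
    and dY: "AE x in M. Y' x - Y x \<in> {-1, 0, 1}"
    and lam: "0 < lam" "lam < 1"
    and Q_def: "Q = lam * \<sigma>Y2"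
    and cond_p: "AE x in M. real_cond_exp M (vimage_algebra (space M) (\<lambda>x. (W x, Y x)) borel)
                   (indicator {x \<in> space M. Y' x - Y x = 1}) x = Q + Rp x"
    and cond_m: "AE x in M. real_cond_exp M (vimage_algebra (space M) (\<lambda>x. (W x, Y x)) borel)
                   (indicator {x \<in> space M. Y' x - Y x = -1}) x = Q + Rm x"
    and Z_indep_coords: "prob_space.indep_vars M (\<lambda>_. borel) (\<lambda>i x. Z x $ i) UNIV"
    and Z_normal: "\<And>i. distributed M lborel (\<lambda>x. Z x $ i) std_normal_density"
    and Z_indep: "prob_space.indep_set M (sets (vimage_algebra (space M) Z borel))
                   (sets (vimage_algebra (space M) (\<lambda>x. (W x, Y x, W' x, Y' x, Rp x, Rm x)) borel))"
  shows "\<forall>h :: real^'d \<Rightarrow> real. \<forall>k :: real.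
           1-lipschitz_on UNIV h \<longrightarrow>
           measure M {x \<in> space M. Y x = k} > 0 \<longrightarrow>
           measure M {x \<in> space M. Y x = k - 1} > 0 \<longrightarrow>
           ennreal \<bar>integral\<^sup>L M (\<lambda>x. (h (W x) - h (matrix_sqrt \<Sigma> *v Z x)) *
                 ((if Y x = k then 1 else 0) - (if Y x = k - 1 then 1 else 0)))\<bar>
           \<le> ennreal (1 / Q) * (\<integral>\<^sup>+ x. ennreal (norm (W' x - W x) *
                   (if Y x \<in> {k - 1, k} then 1 else 0)) \<partial>M)
             + ennreal (1 / Q) * (\<integral>\<^sup>+ x. ennreal ((norm (W x) + sqrt (trace \<Sigma>)) *
                   (\<bar>Rp x\<bar> + \<bar>Rm x\<bar>) * (if Y x \<in> {k - 1, k} then 1 else 0)) \<partial>M)"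
proof -
  interpret prob_space M by fact
  have "Q > 0" if "measure M {x \<in> space M. Y x = k} > 0" "measure M {x \<in> space M. Y x = k - 1} > 0"
    for k
    unfolding Q_def Y_var using lam second_moment_pos[OF meas(3) Y_sq _ that] by simp
  thus ?thesis
    using exchangeable_pair_gaussian_bound[OF meas W_sq Sigma_def exch cond_p cond_m
        Z_indep_coords Z_normal Z_indep]
    by blast
qed

end
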